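(* Let $X_0,X_1,\dots,X_q$ be sets with $X_q=A$, let $\mathcal H_i$ be a family of maps $X_{i-1}\to X_i$ ($1\le i\le q$), let $l\colon Y\times A\to[0,M]$, and set $\mathcal H=\mathcal H_q\circ\dots\circ\mathcal H_1$ and $\mathcal G_i=\mathcal H_q\circ\dots\circ\mathcal H_{i+1}$ for $1\le i\le q-1$. For all $\varepsilon_1,\dots,\varepsilon_q>0$, with $\varepsilon=\sum_{i=1}^q\varepsilon_i$, $$\mathcal C(\varepsilon,l_{\mathcal H})\le\mathcal C(\varepsilon_q,l_{\mathcal H_q})\prod_{i=1}^{q-1}\mathcal C_{l_{\mathcal G_i}}(\varepsilon_i,\mathcal H_i).$$
   Context: For a map $h\colon W\to A$, $l_h\colon W\times Y\to[0,M]$ is $l_h(w,y)=l(y,h(w))$, and $l_{\mathcal K}=\{l_k:k\in\mathcal K\}$; so $l_{\mathcal H}$ consists of functions on $X_0\times Y$ and $l_{\mathcal H_q}$ of functions on $X_{q-1}\times Y$. For a class $\mathcal K$ of functions from a set $W$ into $[0,M]$: $\sigma_{\mathcal K}$ the $\sigma$-algebra generated by inverse images of open balls, $\mathcal P_{\mathcal K}$ the probability measures on it, $d_P(k,k')=\int|k-k'|dP$, $\mathcal N(\varepsilon,S,\rho)$ minimal size of an $\varepsilon$-cover, $\mathcal C(\varepsilon,\mathcal K)=\sup_{P\in\mathcal P_{\mathcal K}}\mathcal N(\varepsilon,\mathcal K,d_P)$ ($\infty$ if unbounded). For a structure $U\xrightarrow{\mathcal F}V\xrightarrow{\mathcal G}A$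 and $P\in\mathcal P_{l_{\mathcal G\circ\mathcal F}}$ (measures on $U\times Y$), $d_{[P,l_{\mathcal G}]}(f,f')=\sup_{g\in\mathcal G}\int|l_{g\circ f}-l_{g\circ f'}|\,dP$ and $\mathcal C_{l_{\mathcal G}}(\varepsilon,\mathcal F)=\sup_{P\in\mathcal P_{l_{\mathcal G\circ\mathcal F}}}\mathcal N(\varepsilon,\mathcal F,d_{[P,l_{\mathcal G}]})$; here applied with $U=X_{i-1}$, $V=X_i$, $\mathcal F=\mathcal H_i$, $\mathcal G=\mathcal G_i$. *)

theory Defs
  imports "HOL-Probability.Probability"
begin

text \<open>All sets X_0, ..., X_q are carried by one ambient type 'x (carrier sets X i);
  maps are total functions 'x => 'x required to send X (i-1) into X i.\<close>

fun comps :: "(nat \<Rightarrow> ('x \<Rightarrow> 'x) set) \<Rightarrow> nat \<Rightarrow> nat \<Rightarrow> ('x \<Rightarrow> 'x) set" where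
  "comps H i 0 = {id}"
| "comps H i (Suc j) = (if j < i then {id}
      else {h \<circ> g | h g. h \<in> H (Suc j) \<and> g \<in> comps H i j})"

definition lossf :: "('y \<Rightarrow> 'a \<Rightarrow> real) \<Rightarrow> ('w \<Rightarrow> 'a) \<Rightarrow> ('w \<times> 'y \<Rightarrow> real)" where
  "lossf l h = (\<lambda>(w, y). l y (h w))"

definition lossc :: "('y \<Rightarrow> 'a \<Rightarrow> real) \<Rightarrow> ('w \<Rightarrow> 'a) set \<Rightarrow> ('w \<times> 'y \<Rightarrow> real) set" where
  "lossc l K = lossf l ` K"

definition gen_sets :: "'u set \<Rightarrow> ('u \<Rightarrow> real) set \<Rightarrow> 'u set set" where
  "gen_sets \<Omega> K = {k -` ball c r \<inter> \<Omega> | k c r. k \<in> K}"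

definition probs :: "'u set \<Rightarrow> ('u \<Rightarrow> real) set \<Rightarrow> 'u measure set" where
  "probs \<Omega> K = {P. prob_space P \<and> space P = \<Omega> \<and> sets P = sigma_sets \<Omega> (gen_sets \<Omega> K)}"

definition L1dist :: "'u measure \<Rightarrow> ('u \<Rightarrow> real) \<Rightarrow> ('u \<Rightarrow> real) \<Rightarrow> ennreal" where
  "L1dist P k k' = ennreal (LINT z|P. \<bar>k z - k' z\<bar>)"

text \<open>Minimal size of an (internal) eps-cover; infinity if no finite cover exists.\<close>
definition covnum :: "real \<Rightarrow> 'b set \<Rightarrow> ('b \<Rightarrow> 'b \<Rightarrow> ennreal) \<Rightarrow> enat" where
  "covnum \<epsilon> S \<rho> = Inf {enat (card T) | T. finite T \<and> T \<subseteq> S \<and> (\<forall>s\<in>S. \<exists>t\<in>T. \<rho> s t \<le> ennreal \<epsilon>)}"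

definition Cnum :: "'u set \<Rightarrow> real \<Rightarrow> ('u \<Rightarrow> real) set \<Rightarrow> enat" where
  "Cnum \<Omega> \<epsilon> K = (SUP P\<in>probs \<Omega> K. covnum \<epsilon> K (L1dist P))"

definition dist_comp :: "('y \<Rightarrow> 'a \<Rightarrow> real) \<Rightarrow> ('v \<Rightarrow> 'a) set \<Rightarrow> ('u \<times> 'y) measure
    \<Rightarrow> ('u \<Rightarrow> 'v) \<Rightarrow> ('u \<Rightarrow> 'v) \<Rightarrow> ennreal" where
  "dist_comp l G P f f' = (SUP g\<in>G. L1dist P (lossf l (g \<circ> f)) (lossf l (g \<circ> f')))"

definition Cnum_comp :: "('u \<times> 'y) set \<Rightarrow> ('y \<Rightarrow> 'a \<Rightarrow> real) \<Rightarrow> ('v \<Rightarrow> 'a) set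
    \<Rightarrow> real \<Rightarrow> ('u \<Rightarrow> 'v) set \<Rightarrow> enat" where
  "Cnum_comp \<Omega> l G \<epsilon> F =
     (SUP P\<in>probs \<Omega> (lossc l {g \<circ> f | g f. g \<in> G \<and> f \<in> F}). covnum \<epsilon> F (dist_comp l G P))"

end

theory Submission
  imports Defs
begin

(* Peel off one layer at a time. For P on X_(i-1) x Y and an eps_i-cover {f_j} of H_i in
   d_[P,l_G], push P forward along (x, y) |-> (f_j x, y) to a measure P_j in P_(l_G) and
   choose an eps'-cover T_j of l_G in d_(P_j), where eps' = eps_(i+1) + ... + eps_q.
   By the triangle inequality
     d_P(l_(g o h), t o (f_j x id)) <= d_[P,l_G](h, f_j) + d_(P_j)(l_g, t),
   so the functions t o (f_j x id) with t in T_j form an (eps_i + eps')-cover of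
   l_(G o H_i) with at most C_(l_G)(eps_i, H_i) * C(eps', l_G) elements. Induction over i
   gives the product. *)

section \<open>Iterated compositions\<close>

lemma comps_refl: "comps H s s = {id}"
  by (cases s) auto

lemma comps_lower_Suc:
  "s < q \<Longrightarrow> comps H s q = {g \<circ> f | g f. g \<in> comps H (Suc s) q \<and> f \<in> H (Suc s)}"
proof (induction q)
  case (Suc j)
  show ?case
  proof (cases "j = s")
    case True
    then show ?thesis by (auto simp: comps_refl)
  next
    case False
    with Suc have "s < j" by simp
    then have "comps H s (Suc j) = {h \<circ> (g \<circ> f) | h g f. h \<in> H (Suc j) \<and> g \<in> comps H (Suc s) j \<and> f \<in> H (Suc s)}"
      by (simp only: comps.simps Suc.IH if_not_P not_less) blast
    also have "\<dots> = {g \<circ> f | g f. g \<in> comps H (Suc s) (Suc j) \<and> f \<in> H (Suc s)}"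
      using \<open>s < j\<close> by (auto; metis comp_assoc)
    finally show ?thesis .
  qed
qed simp

lemma comps_maps_into:
  assumes maps: "\<forall>i\<in>{1..q}. \<forall>h\<in>H i. \<forall>x\<in>X (i - 1). h x \<in> X i"
  shows "s \<le> n \<Longrightarrow> n \<le> q \<Longrightarrow> g \<in> comps H s n \<Longrightarrow> x \<in> X s \<Longrightarrow> g x \<in> X n"
proof (induction n arbitrary: g)
  case (Suc j)
  show ?case
  proof (cases "j < s")
    case True
    with Suc.prems(1) have "s = Suc j" by simp
    with Suc.prems show ?thesis by (simp add: comps_refl)
  next
    case False
    with Suc.prems obtain h g' where "g = h \<circ> g'" "h \<in> H (Suc j)" "g' \<in> comps H s j" by auto
    with Suc False maps show ?thesis by fastforce
  qed
qed simp

section \<open>Covering numbers\<close>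

lemma covnum_le_card:
  assumes "finite T" "T \<subseteq> S" "\<forall>s\<in>S. \<exists>t\<in>T. \<rho> s t \<le> ennreal \<epsilon>"
  shows "covnum \<epsilon> S \<rho> \<le> enat (card T)"
  unfolding covnum_def by (rule Inf_lower) (use assms in blast)

lemma covnum_le_enatE:
  assumes "covnum \<epsilon> S \<rho> \<le> enat n"
  obtains T where "finite T" "T \<subseteq> S" "card T \<le> n" "\<forall>s\<in>S. \<exists>t\<in>T. \<rho> s t \<le> ennreal \<epsilon>"
proof -
  let ?C = "{enat (card T) | T. finite T \<and> T \<subseteq> S \<and> (\<forall>s\<in>S. \<exists>t\<in>T. \<rho> s t \<le> ennreal \<epsilon>)}"
  have "?C \<noteq> {}"
  proof
    assume "?C = {}"
    with assms show False unfolding covnum_def by (simp add: top_enat_def)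
  qed
  then obtain c where "c \<in> ?C" by blast
  then have "covnum \<epsilon> S \<rho> \<in> ?C"
    unfolding covnum_def by (rule wellorder_InfI)
  with assms that show ?thesis by auto
qed

lemma one_le_covnum: "S \<noteq> {} \<Longrightarrow> 1 \<le> covnum \<epsilon> S \<rho>"
  unfolding covnum_def
  by (rule Inf_greatest) (auto simp: one_enat_def Suc_le_eq card_gt_0_iff)

section \<open>Measures on the sigma-algebra generated by a function class\<close>

lemma borel_measurable_gen_sets:
  assumes "k \<in> K" "space P = \<Omega>" "sets P = sigma_sets \<Omega> (gen_sets \<Omega> K)"
  shows "k \<in> borel_measurable P"
proof (subst borel_measurable_iff_greater, intro allI)
  fix a :: real
  have "{x \<in> space P. a < k x} = (\<Union>n::nat. k -` ball (a + real n + 1) (real n + 1) \<inter> \<Omega>)"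
  proof safe
    fix x assume x: "x \<in> space P" "a < k x"
    obtain n :: nat where "k x - a \<le> real n" using real_arch_simple by blast
    with x assms(2) show "x \<in> (\<Union>n::nat. k -` ball (a + real n + 1) (real n + 1) \<inter> \<Omega>)"
      by (auto simp: dist_real_def intro!: exI[of _ n])
  qed (auto simp: dist_real_def assms(2))
  also have "\<dots> \<in> sigma_sets \<Omega> (gen_sets \<Omega> K)"
    by (intro sigma_sets.Union sigma_sets.Basic) (auto simp: gen_sets_def intro: assms(1))
  finally show "{x \<in> space P. a < k x} \<in> sets P" using assms(3) by simp
qed

lemma measurable_gen_sets:
  assumes "space P = \<Omega>'" "sets P = sigma_sets \<Omega>' (gen_sets \<Omega>' K')"
    and "\<phi> \<in> \<Omega>' \<rightarrow> \<Omega>" "\<And>k. k \<in> K \<Longrightarrow> k \<circ> \<phi> \<in> K'"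
  shows "\<phi> \<in> measurable P (sigma \<Omega> (gen_sets \<Omega> K))"
proof (rule measurable_measure_of)
  show "gen_sets \<Omega> K \<subseteq> Pow \<Omega>" by (auto simp: gen_sets_def)
  show "\<phi> \<in> space P \<rightarrow> \<Omega>" using assms(1,3) by simp
  fix A assume "A \<in> gen_sets \<Omega> K"
  then obtain k c r where "k \<in> K" "A = k -` ball c r \<inter> \<Omega>" by (auto simp: gen_sets_def)
  with assms have "\<phi> -` A \<inter> space P = (k \<circ> \<phi>) -` ball c r \<inter> \<Omega>'" by auto
  also have "\<dots> \<in> sets P"
    using assms(2,4) \<open>k \<in> K\<close> by (auto simp: gen_sets_def)
  finally show "\<phi> -` A \<inter> space P \<in> sets P" .
qed

lemma space_sigma_gen_sets: "space (sigma \<Omega> (gen_sets \<Omega> K)) = \<Omega>"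
  by (rule space_measure_of_conv)

lemma sets_sigma_gen_sets: "sets (sigma \<Omega> (gen_sets \<Omega> K)) = sigma_sets \<Omega> (gen_sets \<Omega> K)"
  by (rule sets_measure_of) (auto simp: gen_sets_def)

lemma distr_in_probs:
  assumes P: "P \<in> probs \<Omega>' K'" and "\<phi> \<in> \<Omega>' \<rightarrow> \<Omega>" "\<And>k. k \<in> K \<Longrightarrow> k \<circ> \<phi> \<in> K'"
  shows "distr P (sigma \<Omega> (gen_sets \<Omega> K)) \<phi> \<in> probs \<Omega> K"
proof -
  from P have "prob_space P" "space P = \<Omega>'" "sets P = sigma_sets \<Omega>' (gen_sets \<Omega>' K')"
    by (auto simp: probs_def)
  with assms(2,3) show ?thesis
    unfolding probs_def
    by (simp add: prob_space.prob_space_distr measurable_gen_sets space_sigma_gen_sets sets_sigma_gen_sets)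
qed

lemma L1dist_distr:
  assumes P: "P \<in> probs \<Omega>' K'" and "\<phi> \<in> \<Omega>' \<rightarrow> \<Omega>" "\<And>k. k \<in> K \<Longrightarrow> k \<circ> \<phi> \<in> K'"
    and "k \<in> K" "k' \<in> K"
  shows "L1dist (distr P (sigma \<Omega> (gen_sets \<Omega> K)) \<phi>) k k' = L1dist P (k \<circ> \<phi>) (k' \<circ> \<phi>)"
proof -
  from P have "space P = \<Omega>'" "sets P = sigma_sets \<Omega>' (gen_sets \<Omega>' K')"
    by (auto simp: probs_def)
  then have \<phi>: "\<phi> \<in> measurable P (sigma \<Omega> (gen_sets \<Omega> K))"
    using assms(2,3) by (rule measurable_gen_sets)
  have "(\<lambda>z. \<bar>k z - k' z\<bar>) \<in> borel_measurable (sigma \<Omega> (gen_sets \<Omega> K))"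
    using borel_measurable_gen_sets[OF assms(4) space_sigma_gen_sets sets_sigma_gen_sets]
      borel_measurable_gen_sets[OF assms(5) space_sigma_gen_sets sets_sigma_gen_sets]
    by measurable
  then show ?thesis
    unfolding L1dist_def by (simp add: integral_distr[OF \<phi>])
qed

lemma L1dist_triangle:
  assumes "integrable P k1" "integrable P k2" "integrable P k3"
  shows "L1dist P k1 k3 \<le> L1dist P k1 k2 + L1dist P k2 k3"
proof -
  have "(LINT z|P. \<bar>k1 z - k3 z\<bar>) \<le> (LINT z|P. \<bar>k1 z - k2 z\<bar> + \<bar>k2 z - k3 z\<bar>)"
    using assms by (intro Bochner_Integration.integral_mono) auto
  also have "\<dots> = (LINT z|P. \<bar>k1 z - k2 z\<bar>) + (LINT z|P. \<bar>k2 z - k3 z\<bar>)"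
    using assms by (intro Bochner_Integration.integral_add) auto
  finally have "ennreal (LINT z|P. \<bar>k1 z - k3 z\<bar>)
      \<le> ennreal ((LINT z|P. \<bar>k1 z - k2 z\<bar>) + (LINT z|P. \<bar>k2 z - k3 z\<bar>))"
    by (rule ennreal_leI)
  also have "\<dots> = ennreal (LINT z|P. \<bar>k1 z - k2 z\<bar>) + ennreal (LINT z|P. \<bar>k2 z - k3 z\<bar>)"
    by (intro ennreal_plus Bochner_Integration.integral_nonneg) auto
  finally show ?thesis
    unfolding L1dist_def .
qed

lemma integrable_bounded_gen_sets:
  assumes "P \<in> probs \<Omega> K" "k \<in> K" "\<And>z. z \<in> \<Omega> \<Longrightarrow> \<bar>k z\<bar> \<le> M"
  shows "integrable P k"
proof -
  from assms(1) have "prob_space P" "space P = \<Omega>" "sets P = sigma_sets \<Omega> (gen_sets \<Omega> K)"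
    by (auto simp: probs_def)
  then interpret prob_space P by simp
  from assms(2,3) \<open>space P = \<Omega>\<close> \<open>sets P = _\<close> show ?thesis
    by (intro integrable_const_bound[where B = M] AE_I2 borel_measurable_gen_sets) auto
qed

lemma lossf_comp_map_prod: "lossf l g \<circ> map_prod f id = lossf l (g \<circ> f)"
  by (auto simp: lossf_def)

section \<open>Composing two layers\<close>

locale composition_structure =
  fixes U :: "'u set" and V :: "'v set" and Y :: "'y set"
    and F :: "('u \<Rightarrow> 'v) set" and G :: "('v \<Rightarrow> 'a) set"
    and l :: "'y \<Rightarrow> 'a \<Rightarrow> real" and M :: real
  assumes maps_into: "\<And>f x. f \<in> F \<Longrightarrow> x \<in> U \<Longrightarrow> f x \<in> V"
    and loss_bounded: "\<And>g v y. g \<in> G \<Longrightarrow> v \<in> V \<Longrightarrow> y \<in> Y \<Longrightarrow> \<bar>l y (g v)\<bar> \<le> M"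
begin

abbreviation GF :: "('u \<Rightarrow> 'a) set" where
  "GF \<equiv> {g \<circ> f | g f. g \<in> G \<and> f \<in> F}"

definition push :: "('u \<times> 'y) measure \<Rightarrow> ('u \<Rightarrow> 'v) \<Rightarrow> ('v \<times> 'y) measure" where
  "push P f = distr P (sigma (V \<times> Y) (gen_sets (V \<times> Y) (lossc l G))) (map_prod f id)"

lemma lossc_comp_map_prod: "f \<in> F \<Longrightarrow> k \<in> lossc l G \<Longrightarrow> k \<circ> map_prod f id \<in> lossc l GF"
  by (force simp: lossc_def lossf_comp_map_prod)

lemma map_prod_funcset: "f \<in> F \<Longrightarrow> map_prod f id \<in> U \<times> Y \<rightarrow> V \<times> Y"
  using maps_into by auto

lemma push_in_probs:
  "P \<in> probs (U \<times> Y) (lossc l GF) \<Longrightarrow> f \<in> F \<Longrightarrow> push P f \<in> probs (V \<times> Y) (lossc l G)"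
  unfolding push_def by (rule distr_in_probs[OF _ map_prod_funcset]) (auto intro: lossc_comp_map_prod)

lemma L1dist_push:
  assumes "P \<in> probs (U \<times> Y) (lossc l GF)" "f \<in> F" "g \<in> G" "t \<in> lossc l G"
  shows "L1dist (push P f) (lossf l g) t = L1dist P (lossf l (g \<circ> f)) (t \<circ> map_prod f id)"
proof -
  have "lossf l g \<in> lossc l G" using assms(3) by (simp add: lossc_def)
  with assms show ?thesis
    unfolding push_def lossf_comp_map_prod[symmetric]
    by (intro L1dist_distr[OF _ map_prod_funcset]) (auto intro: lossc_comp_map_prod)
qed

lemma integrable_lossc:
  assumes "P \<in> probs (U \<times> Y) (lossc l GF)" "k \<in> lossc l GF"
  shows "integrable P k"
proof (rule integrable_bounded_gen_sets[OF assms])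
  fix z assume "z \<in> U \<times> Y"
  moreover from assms(2) obtain g f where "g \<in> G" "f \<in> F" "k = lossf l (g \<circ> f)"
    by (auto simp: lossc_def)
  ultimately show "\<bar>k z\<bar> \<le> M"
    by (auto simp: lossf_def intro: loss_bounded maps_into)
qed

lemma L1dist_comp_le:
  assumes P: "P \<in> probs (U \<times> Y) (lossc l GF)" and "g \<in> G" "h \<in> F" "f \<in> F" "t \<in> lossc l G"
  shows "L1dist P (lossf l (g \<circ> h)) (t \<circ> map_prod f id)
    \<le> dist_comp l G P h f + L1dist (push P f) (lossf l g) t"
proof -
  have "L1dist P (lossf l (g \<circ> h)) (t \<circ> map_prod f id)
      \<le> L1dist P (lossf l (g \<circ> h)) (lossf l (g \<circ> f)) + L1dist P (lossf l (g \<circ> f)) (t \<circ> map_prod f id)"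
    using assms by (intro L1dist_triangle integrable_lossc[OF P])
      (auto simp: lossc_def intro: lossc_comp_map_prod[unfolded lossc_def])
  also have "\<dots> \<le> dist_comp l G P h f + L1dist (push P f) (lossf l g) t"
    unfolding L1dist_push[OF assms(1,4,2,5)] dist_comp_def
    using \<open>g \<in> G\<close> by (intro add_right_mono SUP_upper)
  finally show ?thesis .
qed

lemma covnum_comp_le:
  assumes P: "P \<in> probs (U \<times> Y) (lossc l GF)" and "0 \<le> e1" "0 \<le> e2"
    and cov_F: "covnum e1 F (dist_comp l G P) \<le> enat b"
    and cov_G: "\<And>f. f \<in> F \<Longrightarrow> covnum e2 (lossc l G) (L1dist (push P f)) \<le> enat a"
  shows "covnum (e1 + e2) (lossc l GF) (L1dist P) \<le> enat (b * a)"
proof -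
  obtain T1 where T1: "finite T1" "T1 \<subseteq> F" "card T1 \<le> b"
    and cover1: "\<forall>h\<in>F. \<exists>f\<in>T1. dist_comp l G P h f \<le> ennreal e1"
    using cov_F by (rule covnum_le_enatE)
  have "\<forall>f\<in>T1. \<exists>T. finite T \<and> T \<subseteq> lossc l G \<and> card T \<le> a
      \<and> (\<forall>k\<in>lossc l G. \<exists>t\<in>T. L1dist (push P f) k t \<le> ennreal e2)"
  proof
    fix f assume "f \<in> T1"
    with T1(2) have "covnum e2 (lossc l G) (L1dist (push P f)) \<le> enat a"
      by (blast intro: cov_G)
    then obtain T where "finite T" "T \<subseteq> lossc l G" "card T \<le> a"
      "\<forall>k\<in>lossc l G. \<exists>t\<in>T. L1dist (push P f) k t \<le> ennreal e2"
      by (rule covnum_le_enatE)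
    then show "\<exists>T. finite T \<and> T \<subseteq> lossc l G \<and> card T \<le> a
      \<and> (\<forall>k\<in>lossc l G. \<exists>t\<in>T. L1dist (push P f) k t \<le> ennreal e2)" by blast
  qed
  from bchoice[OF this] obtain T2 where T2: "\<forall>f\<in>T1. finite (T2 f) \<and> T2 f \<subseteq> lossc l G
      \<and> card (T2 f) \<le> a \<and> (\<forall>k\<in>lossc l G. \<exists>t\<in>T2 f. L1dist (push P f) k t \<le> ennreal e2)" ..
  define T where "T = (\<Union>f\<in>T1. (\<lambda>t. t \<circ> map_prod f id) ` T2 f)"
  have "finite T"
    using T1(1) T2 by (simp add: T_def)
  moreover have "T \<subseteq> lossc l GF"
    using T1(2) T2 by (fastforce simp: T_def intro!: lossc_comp_map_prod)
  moreover have "\<forall>k\<in>lossc l GF. \<exists>t\<in>T. L1dist P k t \<le> ennreal (e1 + e2)"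
  proof
    fix k assume "k \<in> lossc l GF"
    then obtain g h where "g \<in> G" "h \<in> F" and k: "k = lossf l (g \<circ> h)"
      by (auto simp: lossc_def)
    with cover1 obtain f where "f \<in> T1" and d1: "dist_comp l G P h f \<le> ennreal e1"
      by blast
    moreover have "lossf l g \<in> lossc l G"
      using \<open>g \<in> G\<close> by (simp add: lossc_def)
    ultimately obtain t where "t \<in> T2 f" and d2: "L1dist (push P f) (lossf l g) t \<le> ennreal e2"
      using T2 by blast
    have "f \<in> F" "t \<in> lossc l G"
      using \<open>f \<in> T1\<close> \<open>t \<in> T2 f\<close> T1(2) T2 by auto
    have "L1dist P k (t \<circ> map_prod f id) \<le> dist_comp l G P h f + L1dist (push P f) (lossf l g) t"
      unfolding k by (rule L1dist_comp_le[OF P \<open>g \<in> G\<close> \<open>h \<in> F\<close> \<open>f \<in> F\<close> \<open>t \<in> lossc l G\<close>])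
    also have "\<dots> \<le> ennreal e1 + ennreal e2"
      using d1 d2 by (rule add_mono)
    also have "\<dots> = ennreal (e1 + e2)"
      using assms(2,3) by (rule ennreal_plus[symmetric])
    finally show "\<exists>t\<in>T. L1dist P k t \<le> ennreal (e1 + e2)"
      using \<open>f \<in> T1\<close> \<open>t \<in> T2 f\<close> by (auto simp: T_def)
  qed
  ultimately have "covnum (e1 + e2) (lossc l GF) (L1dist P) \<le> enat (card T)"
    by (rule covnum_le_card)
  also have "card T \<le> b * a"
  proof -
    have "card T \<le> (\<Sum>f\<in>T1. card (T2 f))"
      unfolding T_def using T1(1) T2
      by (intro order_trans[OF card_UN_le] sum_mono card_image_le) auto
    also have "\<dots> \<le> card T1 * a"
      using T2 sum_bounded_above[of T1 "\<lambda>f. card (T2 f)" a] by auto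
    also have "\<dots> \<le> b * a"
      using T1(3) by simp
    finally show ?thesis .
  qed
  finally show ?thesis
    by simp
qed

lemma Cnum_le_mult_Cnum_comp:
  assumes "0 \<le> e1" "0 \<le> e2"
  shows "Cnum (U \<times> Y) (e1 + e2) (lossc l GF)
    \<le> Cnum (V \<times> Y) e2 (lossc l G) * Cnum_comp (U \<times> Y) l G e1 F"
proof -
  define A where "A = Cnum (V \<times> Y) e2 (lossc l G)"
  define B where "B = Cnum_comp (U \<times> Y) l G e1 F"
  have "covnum (e1 + e2) (lossc l GF) (L1dist P) \<le> A * B"
    if P: "P \<in> probs (U \<times> Y) (lossc l GF)" for P
  proof (cases "F = {} \<or> G = {}")
    case True
    then have "lossc l GF = {}" by (auto simp: lossc_def)
    then have "covnum (e1 + e2) (lossc l GF) (L1dist P) \<le> 0"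
      using covnum_le_card[of "{}" "{}"] by (simp add: zero_enat_def)
    then show ?thesis by simp
  next
    case False
    have cov_F: "covnum e1 F (dist_comp l G P) \<le> B"
      unfolding B_def Cnum_comp_def by (rule SUP_upper[OF P])
    have cov_G: "covnum e2 (lossc l G) (L1dist (push P f)) \<le> A" if "f \<in> F" for f
      unfolding A_def Cnum_def by (rule SUP_upper) (rule push_in_probs[OF P that])
    from False obtain f where "f \<in> F" and "lossc l G \<noteq> {}"
      by (auto simp: lossc_def)
    have "1 \<le> A"
      using one_le_covnum[OF \<open>lossc l G \<noteq> {}\<close>] cov_G[OF \<open>f \<in> F\<close>] by (rule order_trans)
    have "1 \<le> B"
      using one_le_covnum[of F] \<open>f \<in> F\<close> cov_F by (blast intro: order_trans)
    show ?thesis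
    proof (cases "A = \<infinity> \<or> B = \<infinity>")
      case True
      moreover have "A \<noteq> 0" "B \<noteq> 0"
        using \<open>1 \<le> A\<close> \<open>1 \<le> B\<close> by (auto simp: one_enat_def zero_enat_def)
      ultimately have "A * B = \<infinity>"
        by (auto simp: imult_is_infinity)
      then show ?thesis by simp
    next
      case False
      then obtain a b where "A = enat a" "B = enat b" by auto
      with covnum_comp_le[OF P assms, of b a] cov_F cov_G show ?thesis
        by (simp add: mult.commute)
    qed
  qed
  then show ?thesis
    unfolding Cnum_def[of "U \<times> Y"] A_def B_def by (rule SUP_least)
qed

end

lemma Cnum_comps_le:
  fixes X :: "nat \<Rightarrow> 'x set" and H :: "nat \<Rightarrow> ('x \<Rightarrow> 'x) set"
    and Y :: "'y set" and l :: "'y \<Rightarrow> 'x \<Rightarrow> real"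
  assumes maps: "\<forall>i\<in>{1..q}. \<forall>h\<in>H i. \<forall>x\<in>X (i - 1). h x \<in> X i"
    and loss_bounds: "\<forall>y\<in>Y. \<forall>a\<in>X q. 0 \<le> l y a \<and> l y a \<le> M"
    and eps_nonneg: "\<forall>i\<in>{1..q}. 0 \<le> eps i"
    and "s < q"
  shows "Cnum (X s \<times> Y) (\<Sum>i=Suc s..q. eps i) (lossc l (comps H s q))
    \<le> Cnum (X (q - 1) \<times> Y) (eps q) (lossc l (H q))
      * (\<Prod>i\<in>{Suc s..<q}. Cnum_comp (X (i - 1) \<times> Y) l (comps H i q) (eps i) (H i))"
proof -
  from \<open>s < q\<close> have "s \<le> q - 1" by simp
  then show ?thesis
  proof (induction s rule: inc_induct)
    case base
    from \<open>s < q\<close> have "comps H (q - 1) q = H q"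
      by (simp add: comps_lower_Suc comps_refl)
    with \<open>s < q\<close> show ?case by simp
  next
    case (step n)
    then have "Suc n < q" by simp
    let ?G = "comps H (Suc n) q"
    interpret composition_structure "X n" "X (Suc n)" Y "H (Suc n)" ?G l M
    proof
      show "f x \<in> X (Suc n)" if "f \<in> H (Suc n)" "x \<in> X n" for f x
        using maps[rule_format, of "Suc n" f x] that \<open>Suc n < q\<close> by simp
      show "\<bar>l y (g v)\<bar> \<le> M" if "g \<in> ?G" "v \<in> X (Suc n)" "y \<in> Y" for g v y
      proof -
        have "g v \<in> X q"
          using comps_maps_into[OF maps, of "Suc n" q g v] that \<open>Suc n < q\<close> by simp
        with loss_bounds \<open>y \<in> Y\<close> show ?thesis by auto
      qed
    qed
    have sum_split: "(\<Sum>i=Suc n..q. eps i) = eps (Suc n) + (\<Sum>i=Suc (Suc n)..q. eps i)"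
      using \<open>Suc n < q\<close> by (intro sum.atLeast_Suc_atMost) simp
    have comps_split: "comps H n q = {g \<circ> f | g f. g \<in> ?G \<and> f \<in> H (Suc n)}"
      using \<open>Suc n < q\<close> by (intro comps_lower_Suc) simp
    have "0 \<le> eps (Suc n)" "0 \<le> (\<Sum>i=Suc (Suc n)..q. eps i)"
      using eps_nonneg \<open>Suc n < q\<close> by (auto intro: sum_nonneg)
    then have "Cnum (X n \<times> Y) (\<Sum>i=Suc n..q. eps i) (lossc l (comps H n q))
        \<le> Cnum (X (Suc n) \<times> Y) (\<Sum>i=Suc (Suc n)..q. eps i) (lossc l ?G)
          * Cnum_comp (X n \<times> Y) l ?G (eps (Suc n)) (H (Suc n))"
      unfolding sum_split comps_split by (rule Cnum_le_mult_Cnum_comp)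
    also have "\<dots> \<le> Cnum (X (q - 1) \<times> Y) (eps q) (lossc l (H q))
        * (\<Prod>i\<in>{Suc (Suc n)..<q}. Cnum_comp (X (i - 1) \<times> Y) l (comps H i q) (eps i) (H i))
        * Cnum_comp (X n \<times> Y) l ?G (eps (Suc n)) (H (Suc n))"
      using step.IH by (rule mult_right_mono) simp
    also have "\<dots> = Cnum (X (q - 1) \<times> Y) (eps q) (lossc l (H q))
        * (\<Prod>i\<in>{Suc n..<q}. Cnum_comp (X (i - 1) \<times> Y) l (comps H i q) (eps i) (H i))"
      using \<open>Suc n < q\<close> by (simp add: prod.atLeast_Suc_lessThan ac_simps)
    finally show ?case .
  qed
qed

theorem lemmaC12:
  fixes X :: "nat \<Rightarrow> 'x set" and H :: "nat \<Rightarrow> ('x \<Rightarrow> 'x) set"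
    and Y :: "'y set" and l :: "'y \<Rightarrow> 'x \<Rightarrow> real" and M :: real
    and q :: nat and eps :: "nat \<Rightarrow> real"
  assumes "q \<ge> 1"
    and "\<forall>i\<in>{1..q}. \<forall>h\<in>H i. \<forall>x\<in>X (i - 1). h x \<in> X i"
    and "\<forall>y\<in>Y. \<forall>a\<in>X q. 0 \<le> l y a \<and> l y a \<le> M"
    and "\<forall>i\<in>{1..q}. eps i > 0"
  shows "Cnum (X 0 \<times> Y) (\<Sum>i=1..q. eps i) (lossc l (comps H 0 q))
    \<le> Cnum (X (q - 1) \<times> Y) (eps q) (lossc l (H q))
      * (\<Prod>i\<in>{1..<q}. Cnum_comp (X (i - 1) \<times> Y) l (comps H i q) (eps i) (H i))"
proof -
  from assms(4) have "\<forall>i\<in>{1..q}. 0 \<le> eps i" by (simp add: less_imp_le)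
  with assms(1-3) show ?thesis
    using Cnum_comps_le[of q H X Y l M eps 0] by simp
qed

end
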